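(* Assume $abcd\neq0$ and $\omega\in\partial B$. Then $\displaystyle\lim_{M\to\infty}\frac{\mathcal{E}_M(\omega)}{M}=\frac23$.
   Context: Setting: $C=\begin{bmatrix} a&b\\ c&d\end{bmatrix}$ a fixed $2\times2$ unitary matrix, $\Delta=\det C$, a fixed square root $\Delta^{1/2}$; for each $M\ge1$, $\Gamma_M=\{0,\dots,M-1\}$ and $E_M$ is the linear map on $\ell^2(\Gamma_M;\mathbb{C}^2)$ with $(E_M\varphi)(x)=P\varphi(x+1)+Q\varphi(x-1)$, $\varphi(-1)=\varphi(M)=0$, $P=\begin{bmatrix} a&b\\0&0\end{bmatrix}$, $Q=\begin{bmatrix}0&0\\c&d\end{bmatrix}$. For $\omega$ on the unit circle let $z=\Delta^{1/2}\omega$ and let $\varphi$ be the unique solution of $(z-E_M)\varphi=\delta_0|R\rangle$, where $|R\rangle=(0,1)^\top$; the energy is $\mathcal{E}_M(\omega)=\sum_{n=0}^{M-1}\|\varphi(n)\|^2_{\mathbb{C}^2}$. Let $x(\omega)=\frac{\omega+\omega^{-1}}{2|a|}$ and $\partial B=\{\omega:|\omega|=1,\ |x(\omega)|=1\}$. *)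

theory Defs
  imports Complex_Main
begin

text \<open>C = [[a,b],[c,d]] is unitary: C^* C = I (entrywise).\<close>
definition unitary2 :: "complex \<Rightarrow> complex \<Rightarrow> complex \<Rightarrow> complex \<Rightarrow> bool" where
  "unitary2 a b c d \<longleftrightarrow>
     cnj a * a + cnj c * c = 1 \<and> cnj a * b + cnj c * d = 0 \<and>
     cnj b * a + cnj d * c = 0 \<and> cnj b * b + cnj d * d = 1"

text \<open>Vectors in l^2(Gamma_M; C^2) are represented as functions nat => complex x complex
  that vanish outside {0..<M}. (E_M phi)(x) = P phi(x+1) + Q phi(x-1), with phi(-1)=phi(M)=0.\<close>
definition Eop :: "complex \<Rightarrow> complex \<Rightarrow> complex \<Rightarrow> complex \<Rightarrow> nat
                    \<Rightarrow> (nat \<Rightarrow> complex \<times> complex) \<Rightarrow> nat \<Rightarrow> complex \<times> complex" where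
  "Eop a b c d M \<phi> x =
     (let nxt = (if x + 1 < M then \<phi> (x + 1) else (0, 0));
          prv = (if x = 0 then (0, 0) else \<phi> (x - 1))
      in (a * fst nxt + b * snd nxt, c * fst prv + d * snd prv))"

definition is_resolvent_sol :: "complex \<Rightarrow> complex \<Rightarrow> complex \<Rightarrow> complex \<Rightarrow> nat \<Rightarrow> complex
                                 \<Rightarrow> (nat \<Rightarrow> complex \<times> complex) \<Rightarrow> bool" where
  "is_resolvent_sol a b c d M z \<phi> \<longleftrightarrow>
     (\<forall>n\<ge>M. \<phi> n = (0, 0)) \<and>
     (\<forall>x<M. (z * fst (\<phi> x) - fst (Eop a b c d M \<phi> x),
              z * snd (\<phi> x) - snd (Eop a b c d M \<phi> x))
            = (if x = 0 then (0, 1) else (0, 0)))"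

definition energy :: "complex \<Rightarrow> complex \<Rightarrow> complex \<Rightarrow> complex \<Rightarrow> complex \<Rightarrow> nat \<Rightarrow> complex \<Rightarrow> real" where
  "energy a b c d sqrt\<Delta> M \<omega> =
     (let \<phi> = (THE \<phi>. is_resolvent_sol a b c d M (sqrt\<Delta> * \<omega>) \<phi>)
      in \<Sum>n<M. (cmod (fst (\<phi> n)))\<^sup>2 + (cmod (snd (\<phi> n)))\<^sup>2)"

definition xfun :: "complex \<Rightarrow> complex \<Rightarrow> complex" where
  "xfun a \<omega> = (\<omega> + inverse \<omega>) / (2 * complex_of_real (cmod a))"

definition boundaryB :: "complex \<Rightarrow> complex set" where
  "boundaryB a = {\<omega>. cmod \<omega> = 1 \<and> cmod (xfun a \<omega>) = 1}"

end

theory Submission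
  imports Defs "HOL-Real_Asymp.Real_Asymp"
begin

text \<open>On \<open>\<partial>B\<close> the transfer matrix of the bulk recursion of \<open>(z - E\<^sub>M) \<phi> = \<delta>\<^sub>0 |R\<rangle>\<close> has a
  double eigenvalue \<open>q\<close> with \<open>|q| = 1\<close>, so its solutions are \<open>q\<^sup>n\<close> times an affine function
  of \<open>n\<close> instead of exponentially growing or decaying ones. The two boundary conditions single
  out \<open>\<phi>(n) = \<kappa> q\<^sup>n (q b m, z + (z - q a) m)\<close> with \<open>m = M - 1 - n\<close>. Writing \<open>B = |b|\<^sup>2\<close>,
  one gets \<open>|\<phi>(n)|\<^sup>2 = |\<kappa>|\<^sup>2 (1 + 2 B m + 2 B m\<^sup>2)\<close> and \<open>|\<kappa>|\<^sup>-\<^sup>2 = 1 + 2 B (M - 1) + B (M - 1)\<^sup>2\<close>,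
  so \<open>E\<^sub>M\<close> is a cubic in \<open>M\<close> with leading coefficient \<open>2 B / 3\<close> divided by a quadratic
  with leading coefficient \<open>B\<close>.\<close>

lemma cmod_add_mult_of_real_squared:
  "(cmod (u + v * of_real t))\<^sup>2 = (cmod u)\<^sup>2 + 2 * t * Re (cnj u * v) + t\<^sup>2 * (cmod v)\<^sup>2"
  unfolding cmod_power2 by (simp add: algebra_simps power2_eq_square)

definition transfer_step ::
    "complex \<Rightarrow> complex \<Rightarrow> complex \<Rightarrow> complex \<Rightarrow> complex \<Rightarrow> (nat \<Rightarrow> complex \<times> complex) \<Rightarrow> nat \<Rightarrow> bool" where
  "transfer_step a b c d z \<phi> x \<longleftrightarrow>
     z * fst (\<phi> x) = a * fst (\<phi> (Suc x)) + b * snd (\<phi> (Suc x)) \<and>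
     z * snd (\<phi> (Suc x)) = c * fst (\<phi> x) + d * snd (\<phi> x)"

lemma is_resolvent_sol_iff:
  assumes "0 < M"
  shows "is_resolvent_sol a b c d M z \<phi> \<longleftrightarrow>
    (\<forall>n\<ge>M. \<phi> n = (0, 0)) \<and> (\<forall>x. Suc x < M \<longrightarrow> transfer_step a b c d z \<phi> x) \<and>
    z * snd (\<phi> 0) = 1 \<and> z * fst (\<phi> (M - 1)) = 0"
proof -
  define S1 where "S1 x \<longleftrightarrow> z * fst (\<phi> x) = a * fst (\<phi> (Suc x)) + b * snd (\<phi> (Suc x))" for x
  define S2 where "S2 y \<longleftrightarrow> z * snd (\<phi> (Suc y)) = c * fst (\<phi> y) + d * snd (\<phi> y)" for y
  have row_iff: "(z * fst (\<phi> x) - fst (Eop a b c d M \<phi> x), z * snd (\<phi> x) - snd (Eop a b c d M \<phi> x))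
      = (if x = 0 then (0, 1) else (0, 0)) \<longleftrightarrow>
    (if Suc x < M then S1 x else z * fst (\<phi> x) = 0) \<and>
    (case x of 0 \<Rightarrow> z * snd (\<phi> 0) = 1 | Suc y \<Rightarrow> S2 y)" for x
    by (cases x) (auto simp: Eop_def Let_def S1_def S2_def)
  have right_end: "(\<forall>x<M. if Suc x < M then S1 x else z * fst (\<phi> x) = 0) \<longleftrightarrow>
      (\<forall>x. Suc x < M \<longrightarrow> S1 x) \<and> z * fst (\<phi> (M - 1)) = 0"
  proof -
    have "x < M \<and> \<not> Suc x < M \<longleftrightarrow> x = M - 1" for x
      using assms by linarith
    then show ?thesis
      by (metis Suc_lessD)
  qed
  have left_end: "(\<forall>x<M. case x of 0 \<Rightarrow> z * snd (\<phi> 0) = 1 | Suc y \<Rightarrow> S2 y) \<longleftrightarrow>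
      z * snd (\<phi> 0) = 1 \<and> (\<forall>y. Suc y < M \<longrightarrow> S2 y)"
    using assms by (auto split: nat.split)
  show ?thesis
    unfolding is_resolvent_sol_def row_iff
    using left_end right_end by (auto simp: transfer_step_def S1_def S2_def)
qed

lemma transfer_step_unique:
  assumes "a \<noteq> 0" and "z \<noteq> 0"
    and "\<forall>x. Suc x < M \<longrightarrow> transfer_step a b c d z \<phi> x"
    and "\<forall>x. Suc x < M \<longrightarrow> transfer_step a b c d z \<psi> x"
    and "\<phi> 0 = \<psi> 0" and "n < M"
  shows "\<phi> n = \<psi> n"
  using \<open>n < M\<close>
proof (induction n)
  case 0
  then show ?case using \<open>\<phi> 0 = \<psi> 0\<close> by simp
next
  case (Suc n)
  then have prev: "\<phi> n = \<psi> n" by simp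
  have step_\<phi>: "transfer_step a b c d z \<phi> n" and step_\<psi>: "transfer_step a b c d z \<psi> n"
    using assms(3,4) Suc.prems by auto
  then have snd_eq: "snd (\<phi> (Suc n)) = snd (\<psi> (Suc n))"
    using prev \<open>z \<noteq> 0\<close> unfolding transfer_step_def by (metis mult_cancel_left)
  with step_\<phi> step_\<psi> prev have "a * fst (\<phi> (Suc n)) = a * fst (\<psi> (Suc n))"
    unfolding transfer_step_def by (metis add_right_cancel)
  with snd_eq \<open>a \<noteq> 0\<close> show ?case by (simp add: prod_eq_iff)
qed

definition edge_family ::
    "complex \<Rightarrow> complex \<Rightarrow> complex \<Rightarrow> complex \<Rightarrow> complex \<Rightarrow> complex \<Rightarrow> nat \<Rightarrow> complex \<times> complex" where
  "edge_family q a b z \<sigma> \<tau> n =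
     (q ^ n * (q * b * (\<sigma> - \<tau> * of_nat n)), q ^ n * (\<tau> * z + (z - q * a) * (\<sigma> - \<tau> * of_nat n)))"

text \<open>The two hypotheses say that the transfer matrix \<open>\<phi>(x) \<mapsto> \<phi>(x + 1)\<close> has determinant
  \<open>d / a = q\<^sup>2\<close> and trace \<open>(z\<^sup>2 + a d - b c) / (a z) = 2 q\<close>, i.e. the double eigenvalue \<open>q\<close>;
  \<open>edge_family\<close> is the general solution \<open>q\<^sup>n\<close> times an affine function of \<open>n\<close>.\<close>

lemma transfer_step_edge_family:
  assumes "d = q\<^sup>2 * a" and "z\<^sup>2 - 2 * q * a * z + (a * d - b * c) = 0"
  shows "transfer_step a b c d z (edge_family q a b z \<sigma> \<tau>) x"
proof -
  define w where "w = \<sigma> - \<tau> * of_nat x"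
  have shift: "\<sigma> - \<tau> * of_nat (Suc x) = w - \<tau>"
    unfolding w_def by (simp add: algebra_simps)
  \<comment> \<open>\<open>algebra\<close> cannot handle the power \<open>q ^ x\<close>, so it is abstracted to \<open>P\<close>\<close>
  have "z * (q * P) * (\<tau> * z + (z - q * a) * (w - \<tau>)) =
      c * (P * (q * b * w)) + d * (P * (\<tau> * z + (z - q * a) * w))" for P
    using assms by algebra
  then have "z * snd (edge_family q a b z \<sigma> \<tau> (Suc x)) =
      c * fst (edge_family q a b z \<sigma> \<tau> x) + d * snd (edge_family q a b z \<sigma> \<tau> x)"
    unfolding edge_family_def fst_conv snd_conv shift power_Suc w_def[symmetric] by (simp add: mult.assoc)
  then show ?thesis
    unfolding transfer_step_def by (simp add: edge_family_def algebra_simps)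
qed

locale band_edge =
  fixes a b c d q z :: complex
  assumes a_nz: "a \<noteq> 0" and b_nz: "b \<noteq> 0"
    and d_eq: "d = q\<^sup>2 * a"
    and z_root: "z\<^sup>2 - 2 * q * a * z + (a * d - b * c) = 0"
    and norm_q: "cmod q = 1" and norm_z: "cmod z = 1"
    and Re_cnj_z_mult_diff: "Re (cnj z * (z - q * a)) = (cmod b)\<^sup>2"
    and norm_diff: "(cmod (z - q * a))\<^sup>2 = (cmod b)\<^sup>2"
begin

lemma q_nz: "q \<noteq> 0" and z_nz: "z \<noteq> 0"
  using norm_q norm_z by auto

lemma norm_edge_affine_squared:
  "(cmod (z + (z - q * a) * of_nat m))\<^sup>2 = 1 + 2 * (cmod b)\<^sup>2 * real m + (cmod b)\<^sup>2 * (real m)\<^sup>2"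
  using cmod_add_mult_of_real_squared[of z "z - q * a" "real m"] norm_z Re_cnj_z_mult_diff norm_diff
  by simp

lemma edge_denominator_nz: "z + (z - q * a) * of_nat m \<noteq> 0"
proof -
  have "(cmod (z + (z - q * a) * of_nat m))\<^sup>2 > 0"
    unfolding norm_edge_affine_squared by (simp add: add_pos_nonneg)
  then show ?thesis by auto
qed

definition edge_scale :: "nat \<Rightarrow> complex" where
  "edge_scale M = 1 / (z * (z + (z - q * a) * of_nat (M - 1)))"

text \<open>The boundary condition at \<open>M - 1\<close> forces \<open>\<sigma> = \<tau> (M - 1)\<close>, the one at \<open>0\<close> forces
  \<open>\<tau> = edge_scale M\<close>.\<close>

definition edge_sol :: "nat \<Rightarrow> nat \<Rightarrow> complex \<times> complex" where
  "edge_sol M n =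
     (if n < M then edge_family q a b z (edge_scale M * of_nat (M - 1)) (edge_scale M) n else (0, 0))"

lemma is_resolvent_sol_edge_sol:
  assumes "0 < M"
  shows "is_resolvent_sol a b c d M z (edge_sol M)"
  unfolding is_resolvent_sol_iff[OF assms]
proof (intro conjI allI impI)
  fix x assume "Suc x < M"
  then show "transfer_step a b c d z (edge_sol M) x"
    using transfer_step_edge_family[OF d_eq z_root] by (simp add: transfer_step_def edge_sol_def)
next
  have "edge_scale M * z + (z - q * a) * (edge_scale M * of_nat (M - 1)) =
      edge_scale M * (z + (z - q * a) * of_nat (M - 1))"
    by (simp add: algebra_simps)
  also have "z * \<dots> = 1"
    using z_nz edge_denominator_nz by (simp add: edge_scale_def)
  finally show "z * snd (edge_sol M 0) = 1"
    using assms by (simp add: edge_sol_def edge_family_def)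
qed (use assms in \<open>simp_all add: edge_sol_def edge_family_def\<close>)

lemma is_resolvent_sol_unique:
  assumes "0 < M" and "is_resolvent_sol a b c d M z \<psi>"
  shows "\<psi> = edge_sol M"
proof -
  have vanish: "\<forall>n\<ge>M. \<psi> n = (0, 0)"
    and bulk: "\<forall>x. Suc x < M \<longrightarrow> transfer_step a b c d z \<psi> x"
    and left: "z * snd (\<psi> 0) = 1" and right: "z * fst (\<psi> (M - 1)) = 0"
    using assms unfolding is_resolvent_sol_iff[OF assms(1)] by auto
  define \<sigma> where "\<sigma> = fst (\<psi> 0) / (q * b)"
  define \<tau> where "\<tau> = (1 / z - (z - q * a) * \<sigma>) / z"
  have "\<psi> 0 = edge_family q a b z \<sigma> \<tau> 0"
    using left q_nz b_nz z_nz by (simp add: edge_family_def \<sigma>_def \<tau>_def prod_eq_iff field_simps)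
  then have agree: "\<psi> n = edge_family q a b z \<sigma> \<tau> n" if "n < M" for n
    using transfer_step_unique[OF a_nz z_nz bulk _ _ that] transfer_step_edge_family[OF d_eq z_root]
    by blast
  have \<sigma>_eq: "\<sigma> = \<tau> * of_nat (M - 1)"
    using right agree[of "M - 1"] assms(1) q_nz b_nz z_nz by (simp add: edge_family_def)
  have "\<tau> * z + (z - q * a) * \<sigma> = 1 / z"
    using z_nz by (simp add: \<tau>_def field_simps)
  then have "z * (\<tau> * (z + (z - q * a) * of_nat (M - 1))) = 1"
    using z_nz by (simp add: \<sigma>_eq algebra_simps)
  then have "\<tau> = edge_scale M"
    using z_nz edge_denominator_nz[of "M - 1"] by (simp add: edge_scale_def eq_divide_eq ac_simps)
  with \<sigma>_eq agree vanish show ?thesis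
    by (auto simp: edge_sol_def)
qed

lemma resolvent_sol_eq_edge_sol:
  assumes "0 < M"
  shows "(THE \<phi>. is_resolvent_sol a b c d M z \<phi>) = edge_sol M"
  using is_resolvent_sol_edge_sol[OF assms] is_resolvent_sol_unique[OF assms] by (rule the_equality)

lemma norm_edge_sol_squared:
  assumes "n < M"
  shows "(cmod (fst (edge_sol M n)))\<^sup>2 + (cmod (snd (edge_sol M n)))\<^sup>2 =
    (1 + 2 * (cmod b)\<^sup>2 * real (M - Suc n) + 2 * (cmod b)\<^sup>2 * (real (M - Suc n))\<^sup>2) /
    (1 + 2 * (cmod b)\<^sup>2 * real (M - 1) + (cmod b)\<^sup>2 * (real (M - 1))\<^sup>2)"
proof -
  define m where "m = M - Suc n"
  define \<kappa> where "\<kappa> = edge_scale M"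
  have "edge_scale M * of_nat (M - 1) - edge_scale M * of_nat n = \<kappa> * of_nat m"
    using assms by (simp add: \<kappa>_def m_def of_nat_diff algebra_simps)
  then have fst_eq: "fst (edge_sol M n) = q ^ n * q * b * \<kappa> * of_nat m"
    and snd_eq: "snd (edge_sol M n) = q ^ n * \<kappa> * (z + (z - q * a) * of_nat m)"
    using assms by (simp_all add: edge_sol_def edge_family_def \<kappa>_def algebra_simps)
  have "(cmod \<kappa>)\<^sup>2 = 1 / (1 + 2 * (cmod b)\<^sup>2 * real (M - 1) + (cmod b)\<^sup>2 * (real (M - 1))\<^sup>2)"
    using norm_edge_affine_squared[of "M - 1"] norm_z
    by (simp add: \<kappa>_def edge_scale_def norm_divide norm_mult power_one_over)
  moreover have "(cmod (fst (edge_sol M n)))\<^sup>2 = (cmod \<kappa>)\<^sup>2 * ((cmod b)\<^sup>2 * (real m)\<^sup>2)"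
    using norm_q by (simp add: fst_eq norm_mult norm_power power_mult_distrib)
  moreover have "(cmod (snd (edge_sol M n)))\<^sup>2 =
      (cmod \<kappa>)\<^sup>2 * (1 + 2 * (cmod b)\<^sup>2 * real m + (cmod b)\<^sup>2 * (real m)\<^sup>2)"
    using norm_q norm_edge_affine_squared[of m]
    by (simp add: snd_eq norm_mult norm_power power_mult_distrib)
  ultimately show ?thesis
    by (simp add: m_def add_divide_distrib[symmetric] algebra_simps)
qed

lemma energy_eq:
  assumes "s * \<omega> = z" and "0 < M"
  shows "energy a b c d s M \<omega> =
    (\<Sum>m<M. 1 + 2 * (cmod b)\<^sup>2 * real m + 2 * (cmod b)\<^sup>2 * (real m)\<^sup>2) /
    (1 + 2 * (cmod b)\<^sup>2 * (real M - 1) + (cmod b)\<^sup>2 * (real M - 1)\<^sup>2)"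
proof -
  define h where "h m = 1 + 2 * (cmod b)\<^sup>2 * real m + 2 * (cmod b)\<^sup>2 * (real m)\<^sup>2" for m
  have "energy a b c d s M \<omega> =
      (\<Sum>n<M. (cmod (fst (edge_sol M n)))\<^sup>2 + (cmod (snd (edge_sol M n)))\<^sup>2)"
    unfolding energy_def assms(1) resolvent_sol_eq_edge_sol[OF assms(2)] Let_def ..
  also have "\<dots> = (\<Sum>n<M. h (M - Suc n)) /
      (1 + 2 * (cmod b)\<^sup>2 * real (M - 1) + (cmod b)\<^sup>2 * (real (M - 1))\<^sup>2)"
    by (simp add: norm_edge_sol_squared h_def sum_divide_distrib)
  also have "(\<Sum>n<M. h (M - Suc n)) = (\<Sum>m<M. h m)"
    by (rule sum.nat_diff_reindex)
  finally show ?thesis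
    using assms(2) by (simp add: h_def of_nat_diff)
qed

end

lemma unitary2_d_eq: "unitary2 a b c d \<Longrightarrow> d = (a * d - b * c) * cnj a"
  unfolding unitary2_def by algebra

lemma unitary2_norms:
  assumes "unitary2 a b c d"
  shows "(cmod b)\<^sup>2 = 1 - (cmod a)\<^sup>2" and "cmod d = cmod a"
proof -
  have col1: "cnj a * a + cnj c * c = 1" and orth: "cnj a * b + cnj c * d = 0"
    and col2: "cnj b * b + cnj d * d = 1"
    using assms unfolding unitary2_def by auto
  have norm_sq: "cnj w * w = complex_of_real ((cmod w)\<^sup>2)" for w :: complex
    by (metis complex_norm_square mult.commute)
  have norm_col1: "(cmod a)\<^sup>2 + (cmod c)\<^sup>2 = 1"
    using col1 unfolding norm_sq by (metis of_real_1 of_real_add of_real_eq_iff)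
  have norm_col2: "(cmod b)\<^sup>2 + (cmod d)\<^sup>2 = 1"
    using col2 unfolding norm_sq by (metis of_real_1 of_real_add of_real_eq_iff)
  have "cmod (cnj a * b) = cmod (cnj c * d)"
    using orth by (metis add_eq_0_iff norm_minus_cancel)
  then have "(cmod a)\<^sup>2 * (cmod b)\<^sup>2 = (cmod c)\<^sup>2 * (cmod d)\<^sup>2"
    by (simp add: norm_mult power_mult_distrib[symmetric])
  then have "(cmod a)\<^sup>2 * ((cmod b)\<^sup>2 + (cmod d)\<^sup>2) = (cmod d)\<^sup>2 * ((cmod a)\<^sup>2 + (cmod c)\<^sup>2)"
    by (simp add: algebra_simps)
  then have "(cmod a)\<^sup>2 = (cmod d)\<^sup>2"
    using norm_col1 norm_col2 by simp
  with norm_col2 show "(cmod b)\<^sup>2 = 1 - (cmod a)\<^sup>2" and "cmod d = cmod a"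
    by (simp_all add: power2_eq_iff_nonneg)
qed

lemma unitary2_norm_det:
  assumes "unitary2 a b c d" and "a \<noteq> 0"
  shows "cmod (a * d - b * c) = 1"
proof -
  have "cmod a = cmod (a * d - b * c) * cmod a"
    using unitary2_d_eq[OF assms(1)] unitary2_norms(2)[OF assms(1)] by (metis complex_mod_cnj norm_mult)
  with assms(2) show ?thesis by simp
qed

lemma boundaryB_Re:
  assumes "a \<noteq> 0" and "\<omega> \<in> boundaryB a"
  shows "cmod \<omega> = 1" and "\<bar>Re \<omega>\<bar> = cmod a"
proof -
  show norm_\<omega>: "cmod \<omega> = 1"
    using assms(2) unfolding boundaryB_def by simp
  then have "inverse \<omega> = cnj \<omega>"
    by (metis complex_norm_square inverse_unique mult.commute of_real_1 power_one)
  then have "xfun a \<omega> = complex_of_real (Re \<omega> / cmod a)"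
    by (simp add: xfun_def complex_add_cnj)
  then have "cmod (xfun a \<omega>) = \<bar>Re \<omega>\<bar> / cmod a"
    by (simp add: norm_divide)
  with assms(2) show "\<bar>Re \<omega>\<bar> = cmod a"
    unfolding boundaryB_def by (simp add: divide_eq_1_iff)
qed

lemma band_edge_at_boundaryB:
  assumes U: "unitary2 a b c d" and S: "s\<^sup>2 = a * d - b * c"
    and N: "a * b * c * d \<noteq> 0" and W: "\<omega> \<in> boundaryB a"
  shows "band_edge a b c d (s * of_real (Re \<omega>) / a) (s * \<omega>)"
proof -
  define r where "r = Re \<omega>"
  define q where "q = s * of_real r / a"
  have a_nz: "a \<noteq> 0" and b_nz: "b \<noteq> 0" using N by auto
  have norm_\<omega>: "cmod \<omega> = 1" and r_abs: "\<bar>r\<bar> = cmod a"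
    using boundaryB_Re[OF a_nz W] by (simp_all add: r_def)
  have "(cmod s)\<^sup>2 = 1"
    using unitary2_norm_det[OF U a_nz] S by (metis norm_power)
  then have norm_s: "cmod s = 1"
    using norm_ge_zero[of s] by (auto simp: power2_eq_1_iff)
  have cnj_s: "cnj s * s = 1" and cnj_\<omega>: "cnj \<omega> * \<omega> = 1"
    using norm_s norm_\<omega> by (metis complex_norm_square mult.commute of_real_1 power_one)+
  have r_sq: "r\<^sup>2 = (cmod a)\<^sup>2"
    using r_abs by (metis power2_abs)
  have b_sq: "(cmod b)\<^sup>2 = 1 - r\<^sup>2"
    using unitary2_norms(1)[OF U] r_sq by simp
  have qa: "q * a = s * of_real r"
    using a_nz by (simp add: q_def)
  have "q\<^sup>2 * a = s\<^sup>2 * of_real (r\<^sup>2) / a"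
    using a_nz by (simp add: q_def power2_eq_square field_simps)
  also have "\<dots> = (a * d - b * c) * (a * cnj a) / a"
    by (simp only: r_sq S complex_norm_square)
  also have "\<dots> = d"
    using unitary2_d_eq[OF U] a_nz by (metis mult.left_commute nonzero_mult_div_cancel_left)
  finally have d_eq: "d = q\<^sup>2 * a" ..
  have "2 * q * a * (s * \<omega>) = 2 * (q * a) * (s * \<omega>)"
    by (simp only: mult.assoc)
  also have "\<dots> = s * \<omega> * s * (\<omega> + cnj \<omega>)"
    unfolding qa by (simp add: r_def complex_add_cnj algebra_simps)
  finally have "2 * q * a * (s * \<omega>) = s * \<omega> * s * (\<omega> + cnj \<omega>)" .
  then have z_root: "(s * \<omega>)\<^sup>2 - 2 * q * a * (s * \<omega>) + (a * d - b * c) = 0"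
    using S cnj_\<omega> by algebra
  have norm_q: "cmod q = 1"
    using norm_s r_abs a_nz by (simp add: q_def norm_mult norm_divide)
  have "cnj (s * \<omega>) * (s * \<omega> - q * a) = (cnj s * s) * (cnj \<omega> * \<omega> - of_real r * cnj \<omega>)"
    unfolding qa by (simp add: algebra_simps)
  then have Re_eq: "Re (cnj (s * \<omega>) * (s * \<omega> - q * a)) = (cmod b)\<^sup>2"
    using cnj_s cnj_\<omega> b_sq by (simp add: r_def power2_eq_square)
  have "cmod (s * \<omega> - q * a) = cmod (\<omega> - of_real r)"
    using norm_s unfolding qa by (simp add: norm_mult flip: right_diff_distrib)
  moreover have "(cmod (\<omega> - of_real r))\<^sup>2 = (cmod \<omega>)\<^sup>2 - r\<^sup>2"
    by (simp add: cmod_power2 r_def)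
  ultimately have norm_diff: "(cmod (s * \<omega> - q * a))\<^sup>2 = (cmod b)\<^sup>2"
    using norm_\<omega> b_sq by simp
  have norm_z: "cmod (s * \<omega>) = 1"
    using norm_s norm_\<omega> by (simp add: norm_mult)
  show ?thesis
    using a_nz b_nz d_eq z_root norm_q norm_z Re_eq norm_diff
    unfolding band_edge_def r_def[symmetric] q_def[symmetric] by blast
qed

lemma sum_lessThan_quadratic:
  fixes B :: real
  shows "(\<Sum>m<M. 1 + 2 * B * real m + 2 * B * (real m)\<^sup>2) =
    real M + B * real M * (real M - 1) + B * (real M - 1) * real M * (2 * real M - 1) / 3"
  by (induction M) (simp_all add: field_simps power2_eq_square)

theorem mainTheorem8:
  fixes a b c d sqrt\<Delta> \<omega> :: complex
  assumes "unitary2 a b c d"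
    and "sqrt\<Delta>\<^sup>2 = a * d - b * c"
    and "a * b * c * d \<noteq> 0"
    and "\<omega> \<in> boundaryB a"
  shows "(\<lambda>M. energy a b c d sqrt\<Delta> M \<omega> / real M) \<longlonglongrightarrow> 2 / 3"
proof -
  interpret band_edge a b c d "sqrt\<Delta> * of_real (Re \<omega>) / a" "sqrt\<Delta> * \<omega>"
    using band_edge_at_boundaryB[OF assms] .
  define B where "B = (cmod b)\<^sup>2"
  have "B > 0"
    using b_nz by (simp add: B_def)
  then have "(\<lambda>M. (real M + B * real M * (real M - 1) + B * (real M - 1) * real M * (2 * real M - 1) / 3) /
      ((1 + 2 * B * (real M - 1) + B * (real M - 1)\<^sup>2) * real M)) \<longlonglongrightarrow> 2 / 3"
    by real_asymp
  moreover have "\<forall>\<^sub>F M in sequentially.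
      (real M + B * real M * (real M - 1) + B * (real M - 1) * real M * (2 * real M - 1) / 3) /
      ((1 + 2 * B * (real M - 1) + B * (real M - 1)\<^sup>2) * real M) = energy a b c d sqrt\<Delta> M \<omega> / real M"
    using eventually_gt_at_top[of 0]
    by eventually_elim (simp add: energy_eq B_def sum_lessThan_quadratic)
  ultimately show ?thesis
    by (rule Lim_transform_eventually)
qed

end
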